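(* Let $n\neq 1$ be a real number, $k_n=n-1$, and $k_0,k_1,k_2\in\mathbb{R}$. On the phase space with canonical coordinates $(r,\phi,p_r,p_\phi)$, $r>0$, restricted to the open set where $\cos(k_n\phi)\sin(k_n\phi)\neq 0$, consider $$H_{na}=\tfrac12 r^{2n}\Big(p_r^2+\tfrac{p_\phi^2}{r^2}\Big)+\frac{k_0}{r^{2k_n}}+r^{2k_n}\Big(\frac{k_1}{\cos^2(k_n\phi)}+\frac{k_2}{\sin^2(k_n\phi)}\Big).$$ With $P_1=r^n\big(p_r\cos(k_n\phi)+\tfrac1r p_\phi\sin(k_n\phi)\big)$ and $P_2=r^n\big(p_r\sin(k_n\phi)-\tfrac1r p_\phi\cos(k_n\phi)\big)$, the functions $$J_{a1}=P_1^2+\frac{2k_0}{r^{2k_n}}\cos^2(k_n\phi)+2k_1r^{2k_n}\sec^2(k_n\phi),\qquad J_{a2}=P_2^2+\frac{2k_0}{r^{2k_n}}\sin^2(k_n\phi)+2k_2r^{2k_n}\csc^2(k_n\phi),$$ $$J_{a3}=p_\phi^2+2\Big(\frac{k_1}{\cos^2(k_n\phi)}+\frac{k_2}{\sin^2(k_n\phi)}\Big)$$ are three independent constants of motion of $H_{na}$, i.e. $\{J_{aj},H_{na}\}=0$ for $j=1,2,3$; hence $H_{na}$ is superintegrable.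
   Context: The Poisson bracket is the canonical one in $(r,\phi,p_r,p_\phi)$. A constant of motion of $H$ is a function $F$ with $\{F,H\}=0$. Superintegrable: admits, besides $H$, two further functionally independent constants of motion. *)

theory Defs
  imports "HOL-Analysis.Analysis"
begin

text \<open>Phase space points are vectors z :: real^4 with canonical coordinates
  z$1 = r, z$2 = phi, z$3 = p_r, z$4 = p_phi.\<close>

definition pd :: "(real^4 \<Rightarrow> real) \<Rightarrow> 4 \<Rightarrow> real^4 \<Rightarrow> real" where
  "pd F i z = deriv (\<lambda>t. F (z + t *\<^sub>R axis i 1)) 0"

definition grad :: "(real^4 \<Rightarrow> real) \<Rightarrow> real^4 \<Rightarrow> real^4" where
  "grad F z = (\<chi> i. pd F i z)"

definition poisson :: "(real^4 \<Rightarrow> real) \<Rightarrow> (real^4 \<Rightarrow> real) \<Rightarrow> real^4 \<Rightarrow> real" where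
  "poisson F G z = pd F 1 z * pd G 3 z - pd F 3 z * pd G 1 z
                 + pd F 2 z * pd G 4 z - pd F 4 z * pd G 2 z"

definition constant_of_motion :: "(real^4) set \<Rightarrow> (real^4 \<Rightarrow> real) \<Rightarrow> (real^4 \<Rightarrow> real) \<Rightarrow> bool" where
  "constant_of_motion D H F \<longleftrightarrow>
     (\<forall>z\<in>D. F differentiable (at z)) \<and> (\<forall>z\<in>D. poisson F H z = 0)"

definition lin_indep3 :: "real^4 \<Rightarrow> real^4 \<Rightarrow> real^4 \<Rightarrow> bool" where
  "lin_indep3 u v w \<longleftrightarrow>
     (\<forall>a b c. a *\<^sub>R u + b *\<^sub>R v + c *\<^sub>R w = 0 \<longrightarrow> a = 0 \<and> b = 0 \<and> c = 0)"

definition funct_indep3 :: "(real^4) set \<Rightarrow> (real^4 \<Rightarrow> real) \<Rightarrow> (real^4 \<Rightarrow> real) \<Rightarrow> (real^4 \<Rightarrow> real) \<Rightarrow> bool" where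
  "funct_indep3 D F G K \<longleftrightarrow>
     (\<exists>U. open U \<and> U \<subseteq> D \<and> D \<subseteq> closure U \<and>
          (\<forall>z\<in>U. lin_indep3 (grad F z) (grad G z) (grad K z)))"

definition superintegrable :: "(real^4) set \<Rightarrow> (real^4 \<Rightarrow> real) \<Rightarrow> bool" where
  "superintegrable D H \<longleftrightarrow>
     (\<exists>F1 F2. constant_of_motion D H F1 \<and> constant_of_motion D H F2 \<and>
              funct_indep3 D H F1 F2)"

definition Hna :: "real \<Rightarrow> real \<Rightarrow> real \<Rightarrow> real \<Rightarrow> real^4 \<Rightarrow> real" where
  "Hna n k0 k1 k2 z = (let r = z$1; ph = z$2; pr = z$3; pph = z$4; kn = n - 1 in
     1/2 * r powr (2*n) * (pr^2 + pph^2 / r^2) + k0 / r powr (2*kn)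
     + r powr (2*kn) * (k1 / (cos (kn*ph))^2 + k2 / (sin (kn*ph))^2))"

definition P1 :: "real \<Rightarrow> real^4 \<Rightarrow> real" where
  "P1 n z = (let r = z$1; ph = z$2; pr = z$3; pph = z$4; kn = n - 1 in
     r powr n * (pr * cos (kn*ph) + 1/r * pph * sin (kn*ph)))"

definition P2 :: "real \<Rightarrow> real^4 \<Rightarrow> real" where
  "P2 n z = (let r = z$1; ph = z$2; pr = z$3; pph = z$4; kn = n - 1 in
     r powr n * (pr * sin (kn*ph) - 1/r * pph * cos (kn*ph)))"

definition Ja1 :: "real \<Rightarrow> real \<Rightarrow> real \<Rightarrow> real^4 \<Rightarrow> real" where
  "Ja1 n k0 k1 z = (let r = z$1; ph = z$2; kn = n - 1 in
     (P1 n z)^2 + 2*k0 / r powr (2*kn) * (cos (kn*ph))^2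
     + 2*k1 * r powr (2*kn) * (1 / cos (kn*ph))^2)"

definition Ja2 :: "real \<Rightarrow> real \<Rightarrow> real \<Rightarrow> real^4 \<Rightarrow> real" where
  "Ja2 n k0 k2 z = (let r = z$1; ph = z$2; kn = n - 1 in
     (P2 n z)^2 + 2*k0 / r powr (2*kn) * (sin (kn*ph))^2
     + 2*k2 * r powr (2*kn) * (1 / sin (kn*ph))^2)"

definition Ja3 :: "real \<Rightarrow> real \<Rightarrow> real \<Rightarrow> real^4 \<Rightarrow> real" where
  "Ja3 n k1 k2 z = (let ph = z$2; pph = z$4; kn = n - 1 in
     pph^2 + 2 * (k1 / (cos (kn*ph))^2 + k2 / (sin (kn*ph))^2))"

definition phase_dom :: "real \<Rightarrow> (real^4) set" where
  "phase_dom n = {z. z$1 > 0 \<and> cos ((n-1) * z$2) * sin ((n-1) * z$2) \<noteq> 0}"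

end

theory Submission
  imports Defs
begin

text \<open>
  On the phase domain the Hamiltonian is the mean of the two separated integrals,
  \<open>H = (J1 + J2) / 2\<close>. Hence \<open>{J1, H} = {J1, J2} / 2 = - {J2, H}\<close>, and \<open>{J1, J2}\<close>
  vanishes identically once everything is written in \<open>\<rho> = r^(2 k\<^sub>n)\<close> and the rescaled
  momenta \<open>r^(-k\<^sub>n) P1\<close>, \<open>r^(-k\<^sub>n) P2\<close>. \<open>J3\<close> commutes with \<open>H\<close> because \<open>J1 + J2\<close>
  depends on \<open>(\<phi>, p\<^sub>\<phi>)\<close> only through \<open>\<rho> J3\<close>.

  The gradient of \<open>J3\<close> has no \<open>(r, p\<^sub>r)\<close> components, so the gradients of \<open>J1, J2, J3\<close>
  are independent wherever \<open>p\<^sub>\<phi>\<close> and the \<open>(r, p\<^sub>r)\<close>-minor of \<open>(J1, J2)\<close> do not vanish.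
  That minor is quadratic in \<open>p\<^sub>r\<close> with leading coefficient proportional to \<open>p\<^sub>\<phi>\<close>, so
  this set is open and dense; independence of \<open>(H, J1, J3)\<close> follows from
  \<open>\<nabla>H = (\<nabla>J1 + \<nabla>J2) / 2\<close>.
\<close>

section \<open>Partial derivatives and Poisson brackets\<close>

lemma vec_nth_has_derivative [derivative_intros]:
  "((\<lambda>x. x $ i) has_derivative (\<lambda>x. x $ i)) F"
  using bounded_linear_vec_nth by (rule bounded_linear_imp_has_derivative)

lemma pd_has_derivative:
  assumes "(F has_derivative F') (at z)"
  shows "pd F i z = F' (axis i 1)"
proof -
  have "((\<lambda>t. z + t *\<^sub>R axis i 1) has_derivative (\<lambda>t. t *\<^sub>R axis i 1)) (at 0)"
    by (auto intro!: derivative_eq_intros)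
  from diff_chain_at[OF this] assms
  have "((\<lambda>t. F (z + t *\<^sub>R axis i 1)) has_derivative (\<lambda>t. F' (t *\<^sub>R axis i 1))) (at 0)"
    by (simp add: comp_def)
  then have "((\<lambda>t. F (z + t *\<^sub>R axis i 1)) has_real_derivative F' (axis i 1)) (at 0)"
    unfolding has_field_derivative_def
    using linear_scale[OF has_derivative_linear[OF assms]]
    by (simp add: mult.commute[of _ "F' (axis i 1)"])
  then show ?thesis
    unfolding pd_def by (rule DERIV_imp_deriv)
qed

lemma pd_linear_form:
  assumes "(F has_derivative (\<lambda>h. a * h$1 + b * h$2 + c * h$3 + d * h$4)) (at z)"
  shows "pd F 1 z = a" "pd F 2 z = b" "pd F 3 z = c" "pd F 4 z = d"
  using pd_has_derivative[OF assms] by (simp_all add: axis_def)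

lemma pd_midpoint:
  assumes "open D" "z \<in> D" "\<And>w. w \<in> D \<Longrightarrow> H w = (F w + G w) / 2"
    and "F differentiable (at z)" "G differentiable (at z)"
  shows "pd H i z = (pd F i z + pd G i z) / 2"
proof -
  obtain F' G' where F': "(F has_derivative F') (at z)" and G': "(G has_derivative G') (at z)"
    using assms(4,5) unfolding differentiable_def by blast
  have "((\<lambda>w. (F w + G w) / 2) has_derivative (\<lambda>h. (F' h + G' h) / 2)) (at z)"
    using F' G' by (auto intro!: derivative_eq_intros)
  then have "(H has_derivative (\<lambda>h. (F' h + G' h) / 2)) (at z)"
    by (rule has_derivative_transform_within_open[OF _ assms(1,2)]) (simp add: assms(3))
  then show ?thesis
    unfolding pd_has_derivative[OF F'] pd_has_derivative[OF G'] by (rule pd_has_derivative)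
qed

lemma poisson_self: "poisson F F z = 0"
  by (simp add: poisson_def)

lemma poisson_antisym: "poisson F G z = - poisson G F z"
  by (simp add: poisson_def)

lemma poisson_midpoint_right:
  assumes "open D" "z \<in> D" "\<And>w. w \<in> D \<Longrightarrow> H w = (F w + G w) / 2"
    and "F differentiable (at z)" "G differentiable (at z)"
  shows "poisson K H z = (poisson K F z + poisson K G z) / 2"
  by (simp only: poisson_def pd_midpoint[OF assms]) (simp add: field_simps)

lemma grad_midpoint:
  assumes "open D" "z \<in> D" "\<And>w. w \<in> D \<Longrightarrow> H w = (F w + G w) / 2"
    and "F differentiable (at z)" "G differentiable (at z)"
  shows "grad H z = (1/2) *\<^sub>R (grad F z + grad G z)"
  unfolding grad_def by (simp add: vec_eq_iff pd_midpoint[OF assms])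

section \<open>Constants of motion\<close>

definition rho :: "real \<Rightarrow> real \<Rightarrow> real" where
  "rho n r = r powr (2 * (n - 1))"

lemma rho_pos: "r > 0 \<Longrightarrow> rho n r > 0"
  by (simp add: rho_def)

lemma rho_has_real_derivative:
  "r > 0 \<Longrightarrow> (rho n has_real_derivative 2 * (n - 1) * rho n r / r) (at r)"
  unfolding rho_def
  by (rule derivative_eq_intros refl | simp)+ (simp add: powr_diff power3_eq_cube power2_eq_square)

lemma rho_coord_has_derivative [derivative_intros]:
  assumes "z$1 > 0"
  shows "((\<lambda>y. rho n (y$1)) has_derivative (\<lambda>h. 2 * (n - 1) * rho n (z$1) / z$1 * h$1)) (at z)"
  using diff_chain_at[OF vec_nth_has_derivative
      rho_has_real_derivative[OF assms, unfolded has_field_derivative_def]]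
  by (simp add: comp_def mult.commute)

lemma powr_squared_eq_rho:
  assumes "r > 0"
  shows "(r powr n)\<^sup>2 = rho n r * r\<^sup>2"
proof -
  have "(r powr n)\<^sup>2 = r powr (2 * (n - 1) + 2)"
    by (simp add: power2_eq_square flip: powr_add)
  also have "\<dots> = rho n r * r powr 2"
    unfolding rho_def by (rule powr_add)
  also have "r powr 2 = r\<^sup>2"
    using assms by simp
  finally show ?thesis .
qed

lemma open_phase_dom: "open (phase_dom n)"
proof -
  have "phase_dom n = (\<lambda>z. z$1) -` {0<..} \<inter> (\<lambda>z. cos ((n-1) * z$2) * sin ((n-1) * z$2)) -` (-{0})"
    by (auto simp: phase_dom_def)
  also have "open \<dots>"
    by (intro open_Int continuous_open_vimage continuous_intros open_greaterThan open_Compl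
        closed_singleton)
  finally show ?thesis .
qed

lemma phase_domD:
  assumes "z \<in> phase_dom n"
  shows "z$1 > 0" "cos ((n-1) * z$2) \<noteq> 0" "sin ((n-1) * z$2) \<noteq> 0" "rho n (z$1) > 0"
  using assms by (auto simp: phase_dom_def rho_pos)

text \<open>On the phase domain \<open>P1 = r^(n-1) * mom1\<close> and \<open>P2 = r^(n-1) * mom2\<close>.\<close>

definition mom1 :: "real \<Rightarrow> real^4 \<Rightarrow> real" where
  "mom1 n z = z$1 * z$3 * cos ((n-1) * z$2) + z$4 * sin ((n-1) * z$2)"

definition mom2 :: "real \<Rightarrow> real^4 \<Rightarrow> real" where
  "mom2 n z = z$1 * z$3 * sin ((n-1) * z$2) - z$4 * cos ((n-1) * z$2)"

lemma mom1_has_derivative [derivative_intros]: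
  "(mom1 n has_derivative (\<lambda>h. z$3 * cos ((n-1) * z$2) * h$1 - (n-1) * mom2 n z * h$2
     + z$1 * cos ((n-1) * z$2) * h$3 + sin ((n-1) * z$2) * h$4)) (at z)"
  unfolding mom1_def mom2_def
  by (rule derivative_eq_intros refl | simp)+ (simp add: algebra_simps)

lemma mom2_has_derivative [derivative_intros]:
  "(mom2 n has_derivative (\<lambda>h. z$3 * sin ((n-1) * z$2) * h$1 + (n-1) * mom1 n z * h$2
     + z$1 * sin ((n-1) * z$2) * h$3 - cos ((n-1) * z$2) * h$4)) (at z)"
  unfolding mom1_def mom2_def
  by (rule derivative_eq_intros refl | simp)+ (simp add: algebra_simps)

lemma mom_rotation:
  "sin ((n-1) * z$2) * mom1 n z - cos ((n-1) * z$2) * mom2 n z = z$4"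
proof -
  have "sin ((n-1) * z$2) * mom1 n z - cos ((n-1) * z$2) * mom2 n z
      = z$4 * ((sin ((n-1) * z$2))\<^sup>2 + (cos ((n-1) * z$2))\<^sup>2)"
    unfolding mom1_def mom2_def by algebra
  then show ?thesis by simp
qed

lemma mom_sum_squares: "(mom1 n z)\<^sup>2 + (mom2 n z)\<^sup>2 = (z$1 * z$3)\<^sup>2 + (z$4)\<^sup>2"
proof -
  have "(mom1 n z)\<^sup>2 + (mom2 n z)\<^sup>2
      = ((z$1 * z$3)\<^sup>2 + (z$4)\<^sup>2) * ((sin ((n-1) * z$2))\<^sup>2 + (cos ((n-1) * z$2))\<^sup>2)"
    unfolding mom1_def mom2_def by algebra
  then show ?thesis by simp
qed

lemma Ja1_eq:
  assumes "z \<in> phase_dom n"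
  shows "Ja1 n k0 k1 z = rho n (z$1) * (mom1 n z)\<^sup>2
      + 2*k0*(cos ((n-1) * z$2))\<^sup>2 / rho n (z$1) + 2*k1*rho n (z$1) / (cos ((n-1) * z$2))\<^sup>2"
  using phase_domD[OF assms]
  by (simp add: Ja1_def P1_def mom1_def Let_def power_mult_distrib powr_squared_eq_rho)
     (simp add: rho_def field_simps)

lemma Ja2_eq:
  assumes "z \<in> phase_dom n"
  shows "Ja2 n k0 k2 z = rho n (z$1) * (mom2 n z)\<^sup>2
      + 2*k0*(sin ((n-1) * z$2))\<^sup>2 / rho n (z$1) + 2*k2*rho n (z$1) / (sin ((n-1) * z$2))\<^sup>2"
  using phase_domD[OF assms]
  by (simp add: Ja2_def P2_def mom2_def Let_def power_mult_distrib powr_squared_eq_rho)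
     (simp add: rho_def field_simps)

lemma Hna_midpoint:
  assumes z: "z \<in> phase_dom n"
  shows "Hna n k0 k1 k2 z = (Ja1 n k0 k1 z + Ja2 n k0 k2 z) / 2"
proof -
  define \<rho> where "\<rho> = rho n (z$1)"
  define c where "c = cos ((n-1) * z$2)"
  define s where "s = sin ((n-1) * z$2)"
  have r: "z$1 > 0" and \<rho>: "\<rho> > 0" and cs: "c\<^sup>2 + s\<^sup>2 = 1"
    using phase_domD[OF z] by (simp_all add: \<rho>_def c_def s_def)
  have "z$1 powr (2*n) = \<rho> * (z$1)\<^sup>2"
    using powr_squared_eq_rho[OF r, of n] by (simp add: \<rho>_def power2_eq_square flip: powr_add)
  then have "Hna n k0 k1 k2 z
      = \<rho> * ((z$1 * z$3)\<^sup>2 + (z$4)\<^sup>2) / 2 + k0 / \<rho> + \<rho> * (k1 / c\<^sup>2 + k2 / s\<^sup>2)"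
    using r by (simp add: Hna_def Let_def \<rho>_def c_def s_def rho_def field_simps)
  also have "k0 / \<rho> = (2*k0*c\<^sup>2 / \<rho> + 2*k0 * s\<^sup>2 / \<rho>) / 2"
    using \<rho> cs by (simp add: field_simps flip: distrib_left)
  also have "\<rho> * ((z$1 * z$3)\<^sup>2 + (z$4)\<^sup>2) / 2
      + (2*k0*c\<^sup>2 / \<rho> + 2*k0 * s\<^sup>2 / \<rho>) / 2 + \<rho> * (k1 / c\<^sup>2 + k2 / s\<^sup>2)
      = (\<rho> * (mom1 n z)\<^sup>2 + 2*k0*c\<^sup>2 / \<rho> + 2*k1*\<rho> / c\<^sup>2
         + (\<rho> * (mom2 n z)\<^sup>2 + 2*k0 * s\<^sup>2 / \<rho> + 2*k2*\<rho> / s\<^sup>2)) / 2"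
    unfolding mom_sum_squares[of n z, symmetric] by (simp add: field_simps)
  also have "\<dots> = (Ja1 n k0 k1 z + Ja2 n k0 k2 z) / 2"
    unfolding Ja1_eq[OF z] Ja2_eq[OF z] by (simp flip: \<rho>_def c_def s_def)
  finally show ?thesis .
qed

lemma Ja1_has_derivative:
  assumes z: "z \<in> phase_dom n"
  defines "r \<equiv> z$1" and "p \<equiv> z$3"
    and "c \<equiv> cos ((n-1) * z$2)" and "s \<equiv> sin ((n-1) * z$2)" and "\<rho> \<equiv> rho n (z$1)"
    and "u \<equiv> mom1 n z" and "w \<equiv> mom2 n z"
  shows "(Ja1 n k0 k1 has_derivative (\<lambda>h.
      (2*(n-1)*\<rho>*u\<^sup>2/r + 2*\<rho>*p*c*u - 4*(n-1)*k0*c\<^sup>2/(r*\<rho>) + 4*(n-1)*k1*\<rho>/(r*c\<^sup>2)) * h$1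
    + (- 2*(n-1)*\<rho>*u*w - 4*(n-1)*k0*c * s/\<rho> + 4*(n-1)*k1*\<rho> * s/c^3) * h$2
    + 2*\<rho>*r*c*u * h$3 + 2*\<rho> * s * u * h$4)) (at z)"
  using phase_domD[OF z]
  apply (intro has_derivative_transform_within_open[OF _ open_phase_dom z Ja1_eq[symmetric]])
   apply (rule derivative_eq_intros refl | simp)+
   apply (simp add: fun_eq_iff r_def p_def c_def s_def \<rho>_def u_def w_def
      field_simps power2_eq_square power3_eq_cube)
  apply assumption
  done

lemma Ja2_has_derivative:
  assumes z: "z \<in> phase_dom n"
  defines "r \<equiv> z$1" and "p \<equiv> z$3"
    and "c \<equiv> cos ((n-1) * z$2)" and "s \<equiv> sin ((n-1) * z$2)" and "\<rho> \<equiv> rho n (z$1)"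
    and "u \<equiv> mom1 n z" and "w \<equiv> mom2 n z"
  shows "(Ja2 n k0 k2 has_derivative (\<lambda>h.
      (2*(n-1)*\<rho>*w\<^sup>2/r + 2*\<rho>*p * s * w - 4*(n-1)*k0 * s\<^sup>2/(r*\<rho>) + 4*(n-1)*k2*\<rho>/(r * s\<^sup>2)) * h$1
    + (2*(n-1)*\<rho>*u*w + 4*(n-1)*k0*c * s/\<rho> - 4*(n-1)*k2*\<rho>*c/s^3) * h$2
    + 2*\<rho>*r * s * w * h$3 + (- 2*\<rho>*c*w) * h$4)) (at z)"
  using phase_domD[OF z]
  apply (intro has_derivative_transform_within_open[OF _ open_phase_dom z Ja2_eq[symmetric]])
   apply (rule derivative_eq_intros refl | simp)+
   apply (simp add: fun_eq_iff r_def p_def c_def s_def \<rho>_def u_def w_def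
      field_simps power2_eq_square power3_eq_cube)
  apply assumption
  done

lemma Ja3_has_derivative:
  assumes z: "z \<in> phase_dom n"
  defines "c \<equiv> cos ((n-1) * z$2)" and "s \<equiv> sin ((n-1) * z$2)"
  shows "(Ja3 n k1 k2 has_derivative (\<lambda>h.
      0 * h$1 + 4*(n-1)*(k1 * s/c^3 - k2*c/s^3) * h$2 + 0 * h$3 + 2 * z$4 * h$4)) (at z)"
  unfolding Ja3_def[abs_def] Let_def
  apply (rule derivative_eq_intros refl | (simp add: phase_domD[OF z]; fail))+
  using phase_domD(2,3)[OF z] unfolding c_def[symmetric] s_def[symmetric]
  by (simp add: fun_eq_iff field_simps power2_eq_square power3_eq_cube)

lemma Ja_differentiable:
  assumes "z \<in> phase_dom n"
  shows "Ja1 n k0 k1 differentiable (at z)" "Ja2 n k0 k2 differentiable (at z)"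
    "Ja3 n k1 k2 differentiable (at z)"
  by (rule differentiableI[OF Ja1_has_derivative[OF assms]]
      differentiableI[OF Ja2_has_derivative[OF assms]] differentiableI[OF Ja3_has_derivative[OF assms]])+

lemmas pd_Ja1 = pd_linear_form[OF Ja1_has_derivative]
lemmas pd_Ja2 = pd_linear_form[OF Ja2_has_derivative]
lemmas pd_Ja3 = pd_linear_form[OF Ja3_has_derivative]

lemma poisson_Ja1_Ja2:
  assumes z: "z \<in> phase_dom n"
  shows "poisson (Ja1 n k0 k1) (Ja2 n k0 k2) z = 0"
  using phase_domD[OF z]
  by (simp add: poisson_def pd_Ja1[OF z] pd_Ja2[OF z] field_simps power2_eq_square power3_eq_cube)

lemma poisson_Ja3_Ja1_Ja2:
  assumes z: "z \<in> phase_dom n"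
  shows "poisson (Ja3 n k1 k2) (Ja1 n k0 k1) z + poisson (Ja3 n k1 k2) (Ja2 n k0 k2) z = 0"
proof -
  have \<phi>: "pd (Ja1 n k0 k1) 2 z + pd (Ja2 n k0 k2) 2 z = rho n (z$1) * pd (Ja3 n k1 k2) 2 z"
    using phase_domD[OF z] by (simp add: pd_Ja1[OF z] pd_Ja2[OF z] pd_Ja3[OF z] field_simps)
  have p\<phi>: "pd (Ja1 n k0 k1) 4 z + pd (Ja2 n k0 k2) 4 z = rho n (z$1) * pd (Ja3 n k1 k2) 4 z"
    unfolding pd_Ja1(4)[OF z] pd_Ja2(4)[OF z] pd_Ja3(4)[OF z] mom_rotation[of n z, symmetric]
    by (simp add: algebra_simps)
  have "poisson (Ja3 n k1 k2) (Ja1 n k0 k1) z + poisson (Ja3 n k1 k2) (Ja2 n k0 k2) z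
      = pd (Ja3 n k1 k2) 2 z * (pd (Ja1 n k0 k1) 4 z + pd (Ja2 n k0 k2) 4 z)
        - pd (Ja3 n k1 k2) 4 z * (pd (Ja1 n k0 k1) 2 z + pd (Ja2 n k0 k2) 2 z)"
    by (simp add: poisson_def pd_Ja3(1,3)[OF z] algebra_simps)
  then show ?thesis
    unfolding \<phi> p\<phi> by simp
qed

lemma Hna_poisson_midpoint:
  assumes "z \<in> phase_dom n"
  shows "poisson F (Hna n k0 k1 k2) z = (poisson F (Ja1 n k0 k1) z + poisson F (Ja2 n k0 k2) z) / 2"
  using open_phase_dom assms Hna_midpoint Ja_differentiable(1,2)[OF assms]
  by (rule poisson_midpoint_right)

lemma constants_of_motion:
  "constant_of_motion (phase_dom n) (Hna n k0 k1 k2) (Ja1 n k0 k1)"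
  "constant_of_motion (phase_dom n) (Hna n k0 k1 k2) (Ja2 n k0 k2)"
  "constant_of_motion (phase_dom n) (Hna n k0 k1 k2) (Ja3 n k1 k2)"
proof -
  have "poisson (Ja1 n k0 k1) (Hna n k0 k1 k2) z = 0"
    and "poisson (Ja2 n k0 k2) (Hna n k0 k1 k2) z = 0"
    and "poisson (Ja3 n k1 k2) (Hna n k0 k1 k2) z = 0" if z: "z \<in> phase_dom n" for z
    unfolding Hna_poisson_midpoint[OF z] poisson_self
    using poisson_Ja1_Ja2[OF z] poisson_Ja3_Ja1_Ja2[OF z]
      poisson_antisym[of "Ja2 n k0 k2" "Ja1 n k0 k1" z]
    by simp_all
  then show "constant_of_motion (phase_dom n) (Hna n k0 k1 k2) (Ja1 n k0 k1)"
    "constant_of_motion (phase_dom n) (Hna n k0 k1 k2) (Ja2 n k0 k2)"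
    "constant_of_motion (phase_dom n) (Hna n k0 k1 k2) (Ja3 n k1 k2)"
    unfolding constant_of_motion_def using Ja_differentiable by auto
qed

section \<open>Functional independence\<close>

lemma lin_indep3_midpoint:
  assumes "lin_indep3 u v w"
  shows "lin_indep3 ((1/2) *\<^sub>R (u + v)) u w"
  unfolding lin_indep3_def
proof (intro allI impI)
  fix a b c :: real
  assume "a *\<^sub>R (1/2) *\<^sub>R (u + v) + b *\<^sub>R u + c *\<^sub>R w = 0"
  then have "(a/2 + b) *\<^sub>R u + (a/2) *\<^sub>R v + c *\<^sub>R w = 0"
    by (simp add: algebra_simps)
  then have "a/2 + b = 0 \<and> a/2 = 0 \<and> c = 0"
    using assms unfolding lin_indep3_def by blast
  then show "a = 0 \<and> b = 0 \<and> c = 0" by simp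
qed

lemma two_by_two_trivial_kernel:
  fixes a b x1 y1 x2 y2 :: real
  assumes "a * x1 + b * y1 = 0" "a * x2 + b * y2 = 0" "x1 * y2 - x2 * y1 \<noteq> 0"
  shows "a = 0 \<and> b = 0"
proof -
  have "a * (x1 * y2 - x2 * y1) = 0" "b * (x1 * y2 - x2 * y1) = 0"
    using assms(1,2) by algebra+
  then show ?thesis using assms(3) by simp
qed

lemma quadratic_nonzero_near:
  fixes a b c x e :: real
  assumes "a \<noteq> 0" "e > 0"
  obtains t where "\<bar>t - x\<bar> < e" "a * t\<^sup>2 + b * t + c \<noteq> 0"
proof -
  have root_sum: "a * (t1 + t2) + b = 0"
    if "a * t1\<^sup>2 + b * t1 + c = 0" "a * t2\<^sup>2 + b * t2 + c = 0" "t1 \<noteq> t2" for t1 t2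
  proof -
    have "(t1 - t2) * (a * (t1 + t2) + b) = 0"
      using that(1,2) by (simp add: algebra_simps power2_eq_square)
    then show ?thesis using that(3) by simp
  qed
  have "\<exists>t\<in>{x + e/2, x + e/3, x + e/4}. a * t\<^sup>2 + b * t + c \<noteq> 0"
  proof (rule ccontr)
    assume "\<not> ?thesis"
    then have "a * (2*x + e/2 + e/3) + b = 0" "a * (2*x + e/2 + e/4) + b = 0"
      using root_sum[of "x + e/2" "x + e/3"] root_sum[of "x + e/2" "x + e/4"] assms(2)
      by (auto simp: add.assoc)
    moreover have "a * (e/3 - e/4) = (a * (2*x + e/2 + e/3) + b) - (a * (2*x + e/2 + e/4) + b)"
      by (simp add: algebra_simps)
    ultimately have "a * (e/3 - e/4) = 0" by simp
    then show False using assms by simp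
  qed
  then obtain t where "t \<in> {x + e/2, x + e/3, x + e/4}" "a * t\<^sup>2 + b * t + c \<noteq> 0"
    by blast
  moreover from this(1) have "\<bar>t - x\<bar> < e"
    using assms(2) by auto
  ultimately show ?thesis by (intro that)
qed

definition radial_minor :: "real \<Rightarrow> real \<Rightarrow> real \<Rightarrow> real \<Rightarrow> real^4 \<Rightarrow> real" where
  "radial_minor n k0 k1 k2 z =
    (let c = cos ((n-1) * z$2); s = sin ((n-1) * z$2); \<rho> = rho n (z$1);
         u = mom1 n z; w = mom2 n z; q = z$4
     in \<rho>\<^sup>2 * q * u * w + 2 * k0 * c * s * q + 2 * \<rho>\<^sup>2 * (k1 * s * w / c\<^sup>2 - k2 * c * u / s\<^sup>2))"

lemma Ja_radial_minor:
  assumes z: "z \<in> phase_dom n"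
  shows "pd (Ja1 n k0 k1) 1 z * pd (Ja2 n k0 k2) 3 z - pd (Ja1 n k0 k1) 3 z * pd (Ja2 n k0 k2) 1 z
    = 4 * (n - 1) * radial_minor n k0 k1 k2 z"
  using phase_domD[OF z]
  unfolding pd_Ja1[OF z] pd_Ja2[OF z] radial_minor_def Let_def mom_rotation[of n z, symmetric]
  by (simp add: field_simps power2_eq_square power3_eq_cube)

lemma radial_minor_quadratic:
  assumes z: "z \<in> phase_dom n"
  obtains B C where "\<And>t. radial_minor n k0 k1 k2 (z + t *\<^sub>R axis 3 1)
    = (rho n (z$1))\<^sup>2 * z$4 * (z$1)\<^sup>2 * cos ((n-1) * z$2) * sin ((n-1) * z$2) * t\<^sup>2 + B * t + C"
proof -
  define r where "r = z$1"
  define p where "p = z$3"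
  define q where "q = z$4"
  define c where "c = cos ((n-1) * z$2)"
  define s where "s = sin ((n-1) * z$2)"
  define \<rho> where "\<rho> = rho n (z$1)"
  have "radial_minor n k0 k1 k2 (z + t *\<^sub>R axis 3 1)
      = \<rho>\<^sup>2 * q * r\<^sup>2 * c * s * t\<^sup>2
        + (2 * \<rho>\<^sup>2 * q * r\<^sup>2 * c * s * p + \<rho>\<^sup>2 * q\<^sup>2 * r * (s\<^sup>2 - c\<^sup>2)
           + 2 * \<rho>\<^sup>2 * r * (k1 * s\<^sup>2 / c\<^sup>2 - k2 * c\<^sup>2 / s\<^sup>2)) * t
        + radial_minor n k0 k1 k2 z" for t
    using phase_domD(2,3)[OF z]
    unfolding radial_minor_def Let_def mom1_def mom2_def
    by (simp add: axis_def r_def p_def q_def c_def s_def \<rho>_def field_simps power2_eq_square)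
  then show ?thesis
    by (intro that) (simp add: r_def q_def c_def s_def \<rho>_def)
qed

definition indep_locus :: "real \<Rightarrow> real \<Rightarrow> real \<Rightarrow> real \<Rightarrow> (real^4) set" where
  "indep_locus n k0 k1 k2 = {z \<in> phase_dom n. z$4 * radial_minor n k0 k1 k2 z \<noteq> 0}"

lemma open_indep_locus: "open (indep_locus n k0 k1 k2)"
proof -
  have "isCont (\<lambda>z. z$4 * radial_minor n k0 k1 k2 z) z" if "z \<in> phase_dom n" for z
    using phase_domD[OF that] unfolding radial_minor_def Let_def mom1_def mom2_def rho_def
    by (auto intro!: continuous_intros)
  then have "continuous_on (phase_dom n) (\<lambda>z. z$4 * radial_minor n k0 k1 k2 z)"
    by (intro continuous_at_imp_continuous_on ballI)
  then have "open (phase_dom n \<inter> (\<lambda>z. z$4 * radial_minor n k0 k1 k2 z) -` (-{0}))"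
    by (rule continuous_open_preimage[OF _ open_phase_dom]) auto
  moreover have "indep_locus n k0 k1 k2 = phase_dom n \<inter> (\<lambda>z. z$4 * radial_minor n k0 k1 k2 z) -` (-{0})"
    by (auto simp: indep_locus_def)
  ultimately show ?thesis by simp
qed

lemma phase_dom_subset_closure_indep_locus:
  "phase_dom n \<subseteq> closure (indep_locus n k0 k1 k2)"
proof
  fix z assume z: "z \<in> phase_dom n"
  show "z \<in> closure (indep_locus n k0 k1 k2)"
    unfolding closure_approachable
  proof (intro allI impI)
    fix e :: real assume e: "e > 0"
    define q where "q = (if z$4 = 0 then e/4 else z$4)"
    have q: "q \<noteq> 0" "\<bar>q - z$4\<bar> < e/2"
      using e by (auto simp: q_def)
    define z' where "z' = z + (q - z$4) *\<^sub>R axis 4 1"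
    have z': "z'$1 = z$1" "z'$2 = z$2" "z'$4 = q"
      by (simp_all add: z'_def axis_def)
    have z'D: "z' \<in> phase_dom n"
      using z by (simp add: phase_dom_def z')
    obtain B C where quad: "\<And>t. radial_minor n k0 k1 k2 (z' + t *\<^sub>R axis 3 1)
        = (rho n (z$1))\<^sup>2 * q * (z$1)\<^sup>2 * cos ((n-1) * z$2) * sin ((n-1) * z$2) * t\<^sup>2 + B * t + C"
      using radial_minor_quadratic[OF z'D] unfolding z' by blast
    have lead: "(rho n (z$1))\<^sup>2 * q * (z$1)\<^sup>2 * cos ((n-1) * z$2) * sin ((n-1) * z$2) \<noteq> 0"
      using phase_domD[OF z] q by simp
    have "e/2 > 0"
      using e by simp
    then obtain t where t: "\<bar>t - 0\<bar> < e/2"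
      and nz: "radial_minor n k0 k1 k2 (z' + t *\<^sub>R axis 3 1) \<noteq> 0"
      unfolding quad by (rule quadratic_nonzero_near[OF lead])
    have "z' + t *\<^sub>R axis 3 1 \<in> indep_locus n k0 k1 k2"
      using z'D nz q by (simp add: indep_locus_def phase_dom_def z' axis_def)
    moreover have "dist (z' + t *\<^sub>R axis 3 1) z < e"
    proof -
      have "dist (z' + t *\<^sub>R axis 3 1) z = norm ((q - z$4) *\<^sub>R axis (4::4) (1::real) + t *\<^sub>R axis 3 1)"
        by (simp add: z'_def dist_norm algebra_simps)
      also have "\<dots> \<le> \<bar>q - z$4\<bar> + \<bar>t\<bar>"
        by (rule order_trans[OF norm_triangle_ineq]) simp
      also have "\<dots> < e"
        using q t by simp
      finally show ?thesis .
    qed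
    ultimately show "\<exists>y\<in>indep_locus n k0 k1 k2. dist y z < e" by blast
  qed
qed

lemma lin_indep3_grad_Ja:
  assumes n: "n \<noteq> 1" and z: "z \<in> indep_locus n k0 k1 k2"
  shows "lin_indep3 (grad (Ja1 n k0 k1) z) (grad (Ja2 n k0 k2) z) (grad (Ja3 n k1 k2) z)"
  unfolding lin_indep3_def
proof (intro allI impI)
  fix a b c
  assume h: "a *\<^sub>R grad (Ja1 n k0 k1) z + b *\<^sub>R grad (Ja2 n k0 k2) z + c *\<^sub>R grad (Ja3 n k1 k2) z = 0"
  have zD: "z \<in> phase_dom n" and q: "z$4 \<noteq> 0" and minor: "radial_minor n k0 k1 k2 z \<noteq> 0"
    using z by (auto simp: indep_locus_def)
  have comp: "a * pd (Ja1 n k0 k1) i z + b * pd (Ja2 n k0 k2) i z + c * pd (Ja3 n k1 k2) i z = 0" for i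
    using arg_cong[OF h, of "\<lambda>x. x $ i"] by (simp add: grad_def)
  have "a = 0 \<and> b = 0"
  proof (rule two_by_two_trivial_kernel)
    show "a * pd (Ja1 n k0 k1) 1 z + b * pd (Ja2 n k0 k2) 1 z = 0"
      "a * pd (Ja1 n k0 k1) 3 z + b * pd (Ja2 n k0 k2) 3 z = 0"
      using comp[of 1] comp[of 3] pd_Ja3(1,3)[OF zD] by simp_all
    show "pd (Ja1 n k0 k1) 1 z * pd (Ja2 n k0 k2) 3 z - pd (Ja1 n k0 k1) 3 z * pd (Ja2 n k0 k2) 1 z \<noteq> 0"
      using Ja_radial_minor[OF zD] n minor by simp
  qed
  moreover from this have "c * (2 * z$4) = 0"
    using comp[of 4] pd_Ja3(4)[OF zD] by simp
  ultimately show "a = 0 \<and> b = 0 \<and> c = 0"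
    using q by simp
qed

lemma lin_indep3_grad_Hna:
  assumes "n \<noteq> 1" and z: "z \<in> indep_locus n k0 k1 k2"
  shows "lin_indep3 (grad (Hna n k0 k1 k2) z) (grad (Ja1 n k0 k1) z) (grad (Ja3 n k1 k2) z)"
proof -
  have zD: "z \<in> phase_dom n"
    using z by (simp add: indep_locus_def)
  have "grad (Hna n k0 k1 k2) z = (1/2) *\<^sub>R (grad (Ja1 n k0 k1) z + grad (Ja2 n k0 k2) z)"
    using open_phase_dom zD Hna_midpoint Ja_differentiable(1,2)[OF zD] by (rule grad_midpoint)
  then show ?thesis
    using lin_indep3_midpoint[OF lin_indep3_grad_Ja[OF assms]] by simp
qed

theorem mainTheorem2:
  fixes n k0 k1 k2 :: real
  assumes "n \<noteq> 1"
  shows "constant_of_motion (phase_dom n) (Hna n k0 k1 k2) (Ja1 n k0 k1)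
       \<and> constant_of_motion (phase_dom n) (Hna n k0 k1 k2) (Ja2 n k0 k2)
       \<and> constant_of_motion (phase_dom n) (Hna n k0 k1 k2) (Ja3 n k1 k2)
       \<and> funct_indep3 (phase_dom n) (Ja1 n k0 k1) (Ja2 n k0 k2) (Ja3 n k1 k2)
       \<and> superintegrable (phase_dom n) (Hna n k0 k1 k2)"
proof -
  let ?U = "indep_locus n k0 k1 k2"
  have U: "open ?U" "?U \<subseteq> phase_dom n" "phase_dom n \<subseteq> closure ?U"
    by (simp_all add: open_indep_locus phase_dom_subset_closure_indep_locus)
       (auto simp: indep_locus_def)
  have J: "funct_indep3 (phase_dom n) (Ja1 n k0 k1) (Ja2 n k0 k2) (Ja3 n k1 k2)"
    unfolding funct_indep3_def by (intro exI[of _ ?U] conjI U ballI lin_indep3_grad_Ja[OF assms])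
  have "funct_indep3 (phase_dom n) (Hna n k0 k1 k2) (Ja1 n k0 k1) (Ja3 n k1 k2)"
    unfolding funct_indep3_def by (intro exI[of _ ?U] conjI U ballI lin_indep3_grad_Hna[OF assms])
  then have "superintegrable (phase_dom n) (Hna n k0 k1 k2)"
    unfolding superintegrable_def
    by (intro exI[of _ "Ja1 n k0 k1"] exI[of _ "Ja3 n k1 k2"] conjI constants_of_motion)
  with J show ?thesis
    by (intro conjI constants_of_motion)
qed

end
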